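(* Let $d$ and $k$ be positive integers. For all sufficiently large $n$, $f(n,n-k,d,2) = n-2d-k+3$.
   Context: All graphs are finite, simple and undirected. The order of a graph is its number of vertices. For a graph $G$ and positive integers $d, r$, let $f_G(d,r)$ be the largest integer $t$ such that in every coloring of the edges of $G$ with $r$ colors there is a monochromatic subgraph (all of its edges of one color) with minimum degree at least $d$ and order at least $t$. For integers $n > K > d$, let $f(n,K,d,r)$ be the minimum of $f_G(d,r)$ over all graphs $G$ with $n$ vertices and minimum degree at least $K$. *)

theory Defs
  imports Main
begin

definition edges_on :: "nat set \<Rightarrow> nat set set" where
  "edges_on V = {e. \<exists>u v. e = {u, v} \<and> u \<noteq> v \<and> u \<in> V \<and> v \<in> V}"

definition is_graph :: "nat set \<Rightarrow> nat set set \<Rightarrow> bool" where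
  "is_graph V E \<longleftrightarrow> finite V \<and> E \<subseteq> edges_on V"

definition deg :: "nat set \<Rightarrow> nat set set \<Rightarrow> nat \<Rightarrow> nat" where
  "deg V E v = card {u \<in> V. {u, v} \<in> E}"

definition min_deg_ge :: "nat set \<Rightarrow> nat set set \<Rightarrow> nat \<Rightarrow> bool" where
  "min_deg_ge V E d \<longleftrightarrow> (\<forall>v\<in>V. d \<le> deg V E v)"

definition is_coloring :: "nat set set \<Rightarrow> (nat set \<Rightarrow> nat) \<Rightarrow> nat \<Rightarrow> bool" where
  "is_coloring E c r \<longleftrightarrow> (\<forall>e\<in>E. c e < r)"

definition has_mono_sub ::
  "nat set \<Rightarrow> nat set set \<Rightarrow> (nat set \<Rightarrow> nat) \<Rightarrow> nat \<Rightarrow> nat \<Rightarrow> bool" where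
  "has_mono_sub V E c d t \<longleftrightarrow>
     (\<exists>V' E' i. V' \<subseteq> V \<and> E' \<subseteq> E \<and> E' \<subseteq> edges_on V' \<and>
        (\<forall>e\<in>E'. c e = i) \<and> min_deg_ge V' E' d \<and> t \<le> card V')"

definition fG :: "nat set \<Rightarrow> nat set set \<Rightarrow> nat \<Rightarrow> nat \<Rightarrow> nat" where
  "fG V E d r = (GREATEST t. \<forall>c. is_coloring E c r \<longrightarrow> has_mono_sub V E c d t)"

(* f(n,K,d,r): minimum of f_G(d,r) over graphs G on n vertices (w.l.o.g. the
   vertex set {0..<n}) with minimum degree at least K *)
definition f :: "nat \<Rightarrow> nat \<Rightarrow> nat \<Rightarrow> nat \<Rightarrow> nat" where
  "f n K d r = Min {fG {..<n} E d r | E. is_graph {..<n} E \<and> min_deg_ge {..<n} E K}"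

end

theory Submission
  imports Defs
begin

(* Fix a 2-colouring and let X_i be the set of vertices outside the d-core of
   colour i. Peeling X_i one vertex at a time shows that colour i has at most (d - 1) |X_i|
   edges meeting X_i: the colour-i degrees of the vertices of X_i sum to at most
   2 (d - 1) |X_i|, and their colour-i degrees into the core to at most (d - 1) |X_i|.
   For x in X_0, all but at most k vertices of X_1 are neighbours of x, and each such edge
   has colour 0 or 1; this gives |X_0| |X_1| <= 2 (d - 1) (|X_0| + |X_1|) + k |X_0| and its
   mirror image. If X_0 and X_1 are disjoint, each lies in the other core, so the edges
   between them are counted only once, and x itself is a non-neighbour; then
   |X_0|, |X_1| >= 2d + k - 2 is impossible. Otherwise a common vertex z of X_0 and X_1 gives
   n - k <= deg z <= 2 (d - 1) (|X_0| + |X_1|), while the product inequalities bound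
   |X_0| + |X_1| by a constant. So for large n one of the two cores has at least
   n - (2d + k - 3) vertices.

   Let M = 2d + k - 3, P = {0..<M}, Q = {M..<2M} and label the pair p, q with
   p in P, q in Q by (p + q) mod M, so every vertex of P or Q sees each label exactly once on
   the other side. Delete the pairs with one of the k - 1 labels >= 2 (d - 1), colour the
   pairs with label < d - 1 red (colour 0), all other edges meeting P blue (colour 1) and the
   remaining edges red. The minimum degree is at least n - k, every vertex of P has red
   degree d - 1 and every vertex of Q has blue degree d - 1, so a monochromatic subgraph of
   minimum degree d avoids P or Q. *)

lemma deg_mono: "finite B \<Longrightarrow> A \<subseteq> B \<Longrightarrow> deg A E v \<le> deg B E v"
  unfolding deg_def by (rule card_mono) auto

lemma deg_edges_mono: "finite A \<Longrightarrow> E \<subseteq> F \<Longrightarrow> deg A E v \<le> deg A F v"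
  unfolding deg_def by (rule card_mono) auto

lemma deg_Un_le: "deg (A \<union> B) E v \<le> deg A E v + deg B E v"
proof -
  have "{u \<in> A \<union> B. {u, v} \<in> E} = {u \<in> A. {u, v} \<in> E} \<union> {u \<in> B. {u, v} \<in> E}"
    by auto
  then show ?thesis
    unfolding deg_def by (simp only: card_Un_le)
qed

lemma deg_Un_disjoint:
  assumes "finite A" "finite B" "A \<inter> B = {}"
  shows "deg (A \<union> B) E v = deg A E v + deg B E v"
proof -
  have "{u \<in> A \<union> B. {u, v} \<in> E} = {u \<in> A. {u, v} \<in> E} \<union> {u \<in> B. {u, v} \<in> E}"
    by auto
  moreover have "{u \<in> A. {u, v} \<in> E} \<inter> {u \<in> B. {u, v} \<in> E} = {}"
    using assms(3) by auto
  ultimately show ?thesis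
    unfolding deg_def using assms(1,2) by (simp add: card_Un_disjoint)
qed

lemma deg_Un_edges_le: "deg A (E \<union> F) v \<le> deg A E v + deg A F v"
proof -
  have "{u \<in> A. {u, v} \<in> E \<union> F} = {u \<in> A. {u, v} \<in> E} \<union> {u \<in> A. {u, v} \<in> F}"
    by auto
  then show ?thesis
    unfolding deg_def by (simp only: card_Un_le)
qed

lemma deg_self_eq_0: "E \<subseteq> edges_on V \<Longrightarrow> deg {v} E v = 0"
  unfolding deg_def edges_on_def by auto

lemma sum_deg_swap:
  assumes "finite A" "finite B"
  shows "(\<Sum>x\<in>A. deg B E x) = (\<Sum>y\<in>B. deg A E y)"
proof -
  have deg_sum: "deg S E v = (\<Sum>u\<in>S. if {u, v} \<in> E then 1 else 0)" if "finite S" for S v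
    unfolding deg_def using that by (simp add: sum.If_cases Int_def)
  have "(\<Sum>x\<in>A. \<Sum>y\<in>B. if {y, x} \<in> E then 1 else 0)
      = (\<Sum>y\<in>B. \<Sum>x\<in>A. if {y, x} \<in> E then 1 else (0::nat))"
    by (rule sum.swap)
  then show ?thesis
    using assms by (simp add: deg_sum insert_commute)
qed

lemma sum_deg_insert:
  assumes "finite S" "s \<notin> S" "E \<subseteq> edges_on V"
  shows "(\<Sum>x\<in>insert s S. deg (insert s S) E x) = (\<Sum>x\<in>S. deg S E x) + 2 * deg S E s"
proof -
  have split: "deg (insert s S) E x = deg S E x + deg {s} E x" for x
    using deg_Un_disjoint[of S "{s}" E x] assms(1,2) by simp
  have "(\<Sum>x\<in>S. deg {s} E x) = deg S E s"
    using sum_deg_swap[of S "{s}" E] assms(1) by simp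
  then show ?thesis
    using assms by (simp add: split sum.distrib deg_self_eq_0)
qed

lemma card_insert_le_deg:
  assumes "finite V" "E \<subseteq> edges_on V" "x \<in> V" "Y \<subseteq> V"
  shows "card (insert x Y) + deg V E x \<le> deg Y E x + card V"
proof -
  let ?N = "{u \<in> V. {u, x} \<in> E}"
  have "x \<notin> ?N"
    using assms(2) unfolding edges_on_def by auto
  then have "insert x Y \<subseteq> (?N \<inter> Y) \<union> (V - ?N)"
    using assms(3,4) by auto
  then have "card (insert x Y) \<le> card ((?N \<inter> Y) \<union> (V - ?N))"
    using assms(1) by (intro card_mono) auto
  also have "\<dots> \<le> card (?N \<inter> Y) + card (V - ?N)"
    by (rule card_Un_le)
  finally have "card (insert x Y) \<le> card (?N \<inter> Y) + card (V - ?N)" .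
  moreover have "?N \<inter> Y = {u \<in> Y. {u, x} \<in> E}"
    using assms(4) by auto
  moreover have "card (V - ?N) + card ?N = card V"
  proof -
    have "?N \<subseteq> V" by auto
    then show ?thesis
      using assms(1) card_Diff_subset[of ?N V] card_mono[of V ?N] finite_subset[of ?N V] by simp
  qed
  ultimately show ?thesis
    unfolding deg_def by simp
qed

lemma has_mono_sub_mono: "has_mono_sub V E c d t \<Longrightarrow> t' \<le> t \<Longrightarrow> has_mono_sub V E c d t'"
  unfolding has_mono_sub_def using order_trans by blast

lemma has_mono_sub_0: "has_mono_sub V E c d 0"
  unfolding has_mono_sub_def min_deg_ge_def
  by (intro exI[of _ "{}"] exI[of _ "{}"] exI[of _ 0]) auto

lemma has_mono_sub_le_card: "finite V \<Longrightarrow> has_mono_sub V E c d t \<Longrightarrow> t \<le> card V"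
  unfolding has_mono_sub_def by (meson card_mono le_trans)

lemma has_mono_sub_le_card_diff:
  assumes "finite V" "has_mono_sub V E c d t"
    and "\<And>i. \<exists>A \<subseteq> V. m \<le> card A \<and> (\<forall>v\<in>A. deg V {e \<in> E. c e = i} v < d)"
  shows "t \<le> card V - m"
proof -
  obtain V' E' i where sub: "V' \<subseteq> V" "E' \<subseteq> E" "\<forall>e\<in>E'. c e = i"
    and V': "min_deg_ge V' E' d" "t \<le> card V'"
    using assms(2) unfolding has_mono_sub_def by blast
  obtain A where A: "A \<subseteq> V" "m \<le> card A" "\<forall>v\<in>A. deg V {e \<in> E. c e = i} v < d"
    using assms(3) by blast
  have "v \<notin> A" if "v \<in> V'" for v
  proof -
    have "d \<le> deg V' E' v"
      using V'(1) that unfolding min_deg_ge_def by blast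
    also have "\<dots> \<le> deg V {e \<in> E. c e = i} v"
      unfolding deg_def using assms(1) sub by (intro card_mono) auto
    finally show ?thesis
      using A(3) by auto
  qed
  then have "V' \<subseteq> V - A"
    using sub(1) by blast
  then have "card V' \<le> card V - card A"
    using assms(1) A(1) card_mono[of "V - A" V'] card_Diff_subset[of A V] finite_subset by fastforce
  then show ?thesis
    using V'(2) A(2) by linarith
qed

lemma le_fG:
  assumes "finite V" "0 < r" "\<And>c. is_coloring E c r \<Longrightarrow> has_mono_sub V E c d t"
  shows "t \<le> fG V E d r"
  unfolding fG_def
proof (rule Greatest_le_nat)
  show "\<forall>c. is_coloring E c r \<longrightarrow> has_mono_sub V E c d t"
    using assms(3) by blast
  fix y assume "\<forall>c. is_coloring E c r \<longrightarrow> has_mono_sub V E c d y"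
  moreover have "is_coloring E (\<lambda>_. 0) r"
    using assms(2) unfolding is_coloring_def by simp
  ultimately show "y \<le> card V"
    using assms(1) has_mono_sub_le_card by blast
qed

lemma fG_le:
  assumes "is_coloring E c r" "\<And>t. has_mono_sub V E c d t \<Longrightarrow> t \<le> b"
  shows "fG V E d r \<le> b"
proof -
  let ?P = "\<lambda>t. \<forall>c. is_coloring E c r \<longrightarrow> has_mono_sub V E c d t"
  have bound: "y \<le> b" if "?P y" for y
    using that assms by blast
  have "?P (Greatest ?P)"
    using has_mono_sub_0 bound by (intro GreatestI_nat[where P = ?P]) auto
  then show ?thesis
    unfolding fG_def by (rule bound)
qed

lemma f_eqI:
  assumes "is_graph {..<n} E\<^sub>0" "min_deg_ge {..<n} E\<^sub>0 K" "fG {..<n} E\<^sub>0 d r \<le> t"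
    and "\<And>E. is_graph {..<n} E \<Longrightarrow> min_deg_ge {..<n} E K \<Longrightarrow> t \<le> fG {..<n} E d r"
  shows "f n K d r = t"
proof -
  let ?G = "{E. is_graph {..<n} E \<and> min_deg_ge {..<n} E K}"
  have "?G \<subseteq> Pow (Pow {..<n})"
    unfolding is_graph_def edges_on_def by auto
  then have "finite ?G"
    by (rule finite_subset) simp
  moreover have "{fG {..<n} E d r | E. is_graph {..<n} E \<and> min_deg_ge {..<n} E K}
      = (\<lambda>E. fG {..<n} E d r) ` ?G"
    by auto
  ultimately show ?thesis
    unfolding f_def using assms by (intro Min_eqI) (auto intro!: antisym)
qed

(* deg W E v counts only neighbours inside W, so min_deg_ge W E d says that W induces a
   subgraph of minimum degree at least d; core V E d is the d-core of (V, E). *)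
definition core :: "nat set \<Rightarrow> nat set set \<Rightarrow> nat \<Rightarrow> nat set" where
  "core V E d = \<Union>{W. W \<subseteq> V \<and> min_deg_ge W E d}"

lemma core_subset: "core V E d \<subseteq> V"
  unfolding core_def by auto

lemma finite_core: "finite V \<Longrightarrow> finite (core V E d)"
  by (rule finite_subset[OF core_subset])

lemma subset_core: "W \<subseteq> V \<Longrightarrow> min_deg_ge W E d \<Longrightarrow> W \<subseteq> core V E d"
  unfolding core_def by auto

lemma min_deg_ge_core:
  assumes "finite V"
  shows "min_deg_ge (core V E d) E d"
  unfolding min_deg_ge_def
proof
  fix v assume "v \<in> core V E d"
  then obtain W where W: "W \<subseteq> V" "min_deg_ge W E d" "v \<in> W"
    unfolding core_def by auto
  then have "d \<le> deg W E v"
    unfolding min_deg_ge_def by auto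
  also have "\<dots> \<le> deg (core V E d) E v"
    using W subset_core finite_core[OF assms] by (intro deg_mono) auto
  finally show "d \<le> deg (core V E d) E v" .
qed

lemma exists_low_deg_outside_core:
  assumes "finite V" "S \<subseteq> V - core V E d" "S \<noteq> {}"
  shows "\<exists>s\<in>S. deg (S \<union> core V E d) E s < d"
proof (rule ccontr)
  assume no_low: "\<not> ?thesis"
  let ?C = "core V E d"
  have "S \<union> ?C \<subseteq> V"
    using assms(2) core_subset by auto
  then have fin: "finite (S \<union> ?C)"
    using assms(1) by (rule finite_subset)
  have S: "d \<le> deg (S \<union> ?C) E v" if "v \<in> S" for v
    using that no_low by auto
  have C: "d \<le> deg (S \<union> ?C) E v" if "v \<in> ?C" for v
    using min_deg_ge_core[OF assms(1)] that deg_mono[OF fin, of ?C E v]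
    unfolding min_deg_ge_def by fastforce
  have "min_deg_ge (S \<union> ?C) E d"
    unfolding min_deg_ge_def using S C by blast
  then have "S \<union> ?C \<subseteq> ?C"
    by (rule subset_core[OF \<open>S \<union> ?C \<subseteq> V\<close>])
  then show False
    using assms(2,3) by auto
qed

(* Peeling: every nonempty S outside the core has a vertex with fewer than d neighbours in
   S together with the core; removing it loses at most 2 (d - 1) from the sum. *)
lemma sum_deg_outside_core:
  assumes "finite V" "E \<subseteq> edges_on V"
  shows "(\<Sum>x\<in>V - core V E d. deg (V - core V E d) E x + 2 * deg (core V E d) E x)
    \<le> 2 * (d - 1) * card (V - core V E d)"
proof -
  let ?C = "core V E d"
  have "finite (V - ?C)"
    using assms(1) by simp
  then show ?thesis
  proof (induction rule: finite_remove_induct)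
    case empty
    show ?case by simp
  next
    case (remove S)
    obtain s where s: "s \<in> S" "deg (S \<union> ?C) E s < d"
      using exists_low_deg_outside_core[OF assms(1) remove.hyps(3,2)] by blast
    define S' where "S' = S - {s}"
    have S: "S = insert s S'" "finite S'" "s \<notin> S'"
      using s(1) remove.hyps(1) unfolding S'_def by auto
    have fin_C: "finite ?C"
      using assms(1) by (rule finite_core)
    have "deg S' E s + deg ?C E s = deg (S' \<union> ?C) E s"
      using S(2) fin_C remove.hyps(3) unfolding S'_def by (intro deg_Un_disjoint[symmetric]) auto
    also have "\<dots> \<le> deg (S \<union> ?C) E s"
      using S fin_C by (intro deg_mono) auto
    finally have low: "deg S' E s + deg ?C E s \<le> d - 1"
      using s(2) by linarith
    have "(\<Sum>x\<in>S. deg S E x + 2 * deg ?C E x)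
        = (\<Sum>x\<in>S. deg S E x) + (\<Sum>x\<in>S. 2 * deg ?C E x)"
      by (rule sum.distrib)
    also have "\<dots> = (\<Sum>x\<in>S'. deg S' E x + 2 * deg ?C E x) + 2 * (deg S' E s + deg ?C E s)"
      unfolding S(1) sum_deg_insert[OF S(2,3) assms(2)] using S(2,3) by (simp add: sum.distrib)
    also have "\<dots> \<le> 2 * (d - 1) * card S' + 2 * (d - 1)"
      using remove.IH[OF s(1)] mult_le_mono2[OF low] unfolding S'_def by (rule add_mono)
    also have "\<dots> = 2 * (d - 1) * card S"
      using S by simp
    finally show ?case .
  qed
qed

lemma sum_deg_outside_core_le:
  assumes "finite V" "E \<subseteq> edges_on V" "Y \<subseteq> V"
  shows "(\<Sum>x\<in>V - core V E d. deg Y E x) \<le> 2 * (d - 1) * card (V - core V E d)"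
proof -
  let ?C = "core V E d"
  have "deg Y E x \<le> deg (V - ?C) E x + 2 * deg ?C E x" for x
  proof -
    have "deg Y E x \<le> deg ((V - ?C) \<union> ?C) E x"
      using assms(1,3) by (intro deg_mono) (auto simp: finite_core)
    also have "\<dots> \<le> deg (V - ?C) E x + deg ?C E x"
      by (rule deg_Un_le)
    finally show ?thesis by linarith
  qed
  then have "(\<Sum>x\<in>V - ?C. deg Y E x) \<le> (\<Sum>x\<in>V - ?C. deg (V - ?C) E x + 2 * deg ?C E x)"
    by (rule sum_mono)
  also have "\<dots> \<le> 2 * (d - 1) * card (V - ?C)"
    using assms(1,2) by (rule sum_deg_outside_core)
  finally show ?thesis .
qed

lemma sum_deg_into_core_le:
  assumes "finite V" "E \<subseteq> edges_on V" "Y \<subseteq> core V E d"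
  shows "(\<Sum>x\<in>V - core V E d. deg Y E x) \<le> (d - 1) * card (V - core V E d)"
proof -
  let ?C = "core V E d"
  have "2 * deg Y E x \<le> deg (V - ?C) E x + 2 * deg ?C E x" for x
    using assms finite_core[OF assms(1)] deg_mono[of ?C Y E x] by simp
  then have "2 * (\<Sum>x\<in>V - ?C. deg Y E x) \<le> (\<Sum>x\<in>V - ?C. deg (V - ?C) E x + 2 * deg ?C E x)"
    unfolding sum_distrib_left by (rule sum_mono)
  also have "\<dots> \<le> 2 * (d - 1) * card (V - ?C)"
    using assms(1,2) by (rule sum_deg_outside_core)
  finally show ?thesis by simp
qed

lemma has_mono_sub_core:
  assumes "finite V" "E \<subseteq> edges_on V"
  shows "has_mono_sub V E c d (card (core V {e \<in> E. c e = i} d))"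
proof -
  let ?C = "core V {e \<in> E. c e = i} d"
  let ?E = "{e \<in> E. c e = i \<and> e \<subseteq> ?C}"
  have "?E \<subseteq> edges_on ?C"
  proof
    fix e assume e: "e \<in> ?E"
    then obtain u v where "e = {u, v}" "u \<noteq> v"
      using assms(2) unfolding edges_on_def by blast
    then show "e \<in> edges_on ?C"
      using e unfolding edges_on_def by auto
  qed
  moreover have "deg ?C ?E v = deg ?C {e \<in> E. c e = i} v" if "v \<in> ?C" for v
    unfolding deg_def using that by (intro arg_cong[where f = card]) auto
  then have "min_deg_ge ?C ?E d"
    using min_deg_ge_core[OF assms(1)] unfolding min_deg_ge_def by simp
  ultimately show ?thesis
    unfolding has_mono_sub_def
    by (intro exI[of _ ?C] exI[of _ ?E] exI[of _ i]) (auto simp: core_subset)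
qed

context
  fixes V :: "nat set" and E F F' :: "nat set set" and k d :: nat
  assumes fin: "finite V" and F: "F \<subseteq> edges_on V" and F': "F' \<subseteq> edges_on V"
    and cover: "E \<subseteq> F \<union> F'" and min_deg: "min_deg_ge V E (card V - k)"
begin

lemma card_le_deg_add: "x \<in> V \<Longrightarrow> card V \<le> deg V E x + k"
  using min_deg unfolding min_deg_ge_def by fastforce

lemma sum_card_insert_outside_cores_le:
  "(\<Sum>x\<in>V - core V F d. card (insert x (V - core V F' d)))
    \<le> (\<Sum>x\<in>V - core V F d. deg (V - core V F' d) F x)
      + (\<Sum>y\<in>V - core V F' d. deg (V - core V F d) F' y) + k * card (V - core V F d)"
proof -
  let ?X = "V - core V F d" and ?Y = "V - core V F' d"
  have "E \<subseteq> edges_on V"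
    using F F' cover by blast
  have "card (insert x ?Y) \<le> deg ?Y F x + deg ?Y F' x + k" if "x \<in> ?X" for x
  proof -
    have "card (insert x ?Y) + deg V E x \<le> deg ?Y E x + card V"
      using fin \<open>E \<subseteq> edges_on V\<close> that by (intro card_insert_le_deg) auto
    moreover have "deg ?Y E x \<le> deg ?Y (F \<union> F') x"
      using fin cover by (intro deg_edges_mono) auto
    moreover have "card V \<le> deg V E x + k"
      using that by (intro card_le_deg_add) auto
    ultimately show ?thesis
      using deg_Un_edges_le[of ?Y F F' x] by linarith
  qed
  then have "(\<Sum>x\<in>?X. card (insert x ?Y)) \<le> (\<Sum>x\<in>?X. deg ?Y F x + deg ?Y F' x + k)"
    by (rule sum_mono)
  also have "\<dots> = (\<Sum>x\<in>?X. deg ?Y F x) + (\<Sum>x\<in>?X. deg ?Y F' x) + k * card ?X"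
    by (simp add: sum.distrib)
  also have "(\<Sum>x\<in>?X. deg ?Y F' x) = (\<Sum>y\<in>?Y. deg ?X F' y)"
    using fin by (intro sum_deg_swap) auto
  finally show ?thesis .
qed

lemma card_mult_outside_cores_le:
  "card (V - core V F d) * card (V - core V F' d)
    \<le> 2 * (d - 1) * (card (V - core V F d) + card (V - core V F' d)) + k * card (V - core V F d)"
proof -
  let ?X = "V - core V F d" and ?Y = "V - core V F' d"
  have "card ?Y \<le> card (insert x ?Y)" for x
    using fin by (intro card_mono) auto
  then have "card ?X * card ?Y \<le> (\<Sum>x\<in>?X. card (insert x ?Y))"
    using sum_mono[of ?X "\<lambda>_. card ?Y"] by simp
  also have "\<dots> \<le> 2 * (d - 1) * card ?X + 2 * (d - 1) * card ?Y + k * card ?X"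
  proof -
    have "(\<Sum>x\<in>?X. deg ?Y F x) \<le> 2 * (d - 1) * card ?X"
      using fin F by (intro sum_deg_outside_core_le) auto
    moreover have "(\<Sum>y\<in>?Y. deg ?X F' y) \<le> 2 * (d - 1) * card ?Y"
      using fin F' by (intro sum_deg_outside_core_le) auto
    ultimately show ?thesis
      using sum_card_insert_outside_cores_le by linarith
  qed
  finally show ?thesis
    by (simp add: algebra_simps)
qed

lemma card_mult_outside_disjoint_cores_le:
  assumes "(V - core V F d) \<inter> (V - core V F' d) = {}"
  shows "card (V - core V F d) * (card (V - core V F' d) + 1)
    \<le> (d - 1) * (card (V - core V F d) + card (V - core V F' d)) + k * card (V - core V F d)"
proof -
  let ?X = "V - core V F d" and ?Y = "V - core V F' d"
  have "card ?X * (card ?Y + 1) = (\<Sum>x\<in>?X. card (insert x ?Y))"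
    using fin assms by (simp add: card_insert_if disjoint_iff)
  also have "\<dots> \<le> (d - 1) * card ?X + (d - 1) * card ?Y + k * card ?X"
  proof -
    have "(\<Sum>x\<in>?X. deg ?Y F x) \<le> (d - 1) * card ?X"
      using fin F assms by (intro sum_deg_into_core_le) auto
    moreover have "(\<Sum>y\<in>?Y. deg ?X F' y) \<le> (d - 1) * card ?Y"
      using fin F' assms by (intro sum_deg_into_core_le) auto
    ultimately show ?thesis
      using sum_card_insert_outside_cores_le by linarith
  qed
  finally show ?thesis
    by (simp add: algebra_simps)
qed

lemma card_le_outside_cores:
  assumes "z \<in> (V - core V F d) \<inter> (V - core V F' d)"
  shows "card V \<le> 2 * (d - 1) * (card (V - core V F d) + card (V - core V F' d)) + k"
proof -
  let ?X = "V - core V F d" and ?Y = "V - core V F' d"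
  have "card V \<le> deg V E z + k"
    using assms by (intro card_le_deg_add) auto
  also have "deg V E z \<le> deg V (F \<union> F') z"
    using fin cover by (intro deg_edges_mono) auto
  also have "\<dots> \<le> deg V F z + deg V F' z"
    by (rule deg_Un_edges_le)
  also have "deg V F z \<le> (\<Sum>x\<in>?X. deg V F x)"
    using fin assms by (intro member_le_sum) auto
  also have "\<dots> \<le> 2 * (d - 1) * card ?X"
    using fin F by (intro sum_deg_outside_core_le) auto
  also have "deg V F' z \<le> (\<Sum>y\<in>?Y. deg V F' y)"
    using fin assms by (intro member_le_sum) auto
  also have "\<dots> \<le> 2 * (d - 1) * card ?Y"
    using fin F' by (intro sum_deg_outside_core_le) auto
  finally show ?thesis
    by (simp add: algebra_simps)
qed

end

lemma add_le_of_double_mult_le: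
  fixes a b m :: nat
  assumes "m < 2 * a" "m < 2 * b" "2 * (a * b) \<le> m * (a + b)"
  shows "a + b \<le> m * (m + 1)"
proof -
  define x y where "x = 2 * int a - int m" and "y = 2 * int b - int m"
  have pos: "1 \<le> x" "1 \<le> y"
    using assms(1,2) unfolding x_def y_def by linarith+
  have "2 * (int a * int b) \<le> int m * (int a + int b)"
    using assms(3) by (metis of_nat_add of_nat_le_iff of_nat_mult of_nat_numeral)
  then have "x * y \<le> int m * int m"
    unfolding x_def y_def by (simp add: algebra_simps)
  moreover have "x \<le> x * y" "y \<le> x * y"
    using pos mult_left_mono[of 1 y x] mult_right_mono[of 1 x y] by simp_all
  ultimately have "x + y \<le> 2 * (int m * int m)"
    by linarith
  then have "int (a + b) \<le> int (m * (m + 1))"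
    unfolding x_def y_def by (simp add: algebra_simps)
  then show ?thesis
    by (simp only: of_nat_le_iff)
qed

lemma has_mono_sub_large:
  assumes G: "is_graph V E" and min_deg: "min_deg_ge V E (card V - k)"
    and c: "is_coloring E c 2" and "0 < d" "0 < k"
    and large: "2 * (d - 1) * ((4 * (d - 1) + k) * (4 * (d - 1) + k + 1)) + k < card V"
  shows "has_mono_sub V E c d (card V - (2 * d + k - 3))"
proof (rule ccontr)
  assume no_sub: "\<not> ?thesis"
  let ?D = "d - 1" and ?m = "4 * (d - 1) + k"
  let ?E0 = "{e \<in> E. c e = 0}" and ?E1 = "{e \<in> E. c e = 1}"
  define X where "X = V - core V ?E0 d"
  define Y where "Y = V - core V ?E1 d"
  have fin: "finite V" and EV: "E \<subseteq> edges_on V"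
    using G unfolding is_graph_def by auto
  have E0: "?E0 \<subseteq> edges_on V" and E1: "?E1 \<subseteq> edges_on V"
    using EV by auto
  have cover01: "E \<subseteq> ?E0 \<union> ?E1" and cover10: "E \<subseteq> ?E1 \<union> ?E0"
    using c unfolding is_coloring_def by auto
  have large_outside: "2 * ?D + k \<le> card (V - core V {e \<in> E. c e = i} d)" for i
  proof -
    have "\<not> card V - (2 * d + k - 3) \<le> card (core V {e \<in> E. c e = i} d)"
      using no_sub has_mono_sub_mono[OF has_mono_sub_core[OF fin EV]] by blast
    then show ?thesis
      using card_Diff_subset[OF finite_core[OF fin] core_subset] \<open>0 < d\<close> \<open>0 < k\<close> by simp
  qed
  have X: "2 * ?D + k \<le> card X" and Y: "2 * ?D + k \<le> card Y"
    unfolding X_def Y_def by (rule large_outside)+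
  consider (meet) z where "z \<in> X \<inter> Y" | (disjoint) "X \<inter> Y = {}"
    by blast
  then show False
  proof cases
    case meet
    have "card X * card Y \<le> 2 * ?D * (card X + card Y) + k * card X"
      "card Y * card X \<le> 2 * ?D * (card Y + card X) + k * card Y"
      unfolding X_def Y_def
      by (rule card_mult_outside_cores_le[OF fin E0 E1 cover01 min_deg]
               card_mult_outside_cores_le[OF fin E1 E0 cover10 min_deg])+
    then have "2 * (card X * card Y) \<le> ?m * (card X + card Y)"
      by (simp add: algebra_simps)
    then have "card X + card Y \<le> ?m * (?m + 1)"
      using X Y \<open>0 < k\<close> by (intro add_le_of_double_mult_le) auto
    moreover have "card V \<le> 2 * ?D * (card X + card Y) + k"
      using meet unfolding X_def Y_def by (rule card_le_outside_cores[OF fin E0 E1 cover01 min_deg])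
    ultimately show False
      using large mult_le_mono2[of "card X + card Y" "?m * (?m + 1)" "2 * ?D"] by linarith
  next
    case disjoint
    then have "Y \<inter> X = {}"
      by blast
    have "card X * (card Y + 1) \<le> ?D * (card X + card Y) + k * card X"
      using disjoint unfolding X_def Y_def
      by (rule card_mult_outside_disjoint_cores_le[OF fin E0 E1 cover01 min_deg])
    moreover have "card Y * (card X + 1) \<le> ?D * (card Y + card X) + k * card Y"
      using \<open>Y \<inter> X = {}\<close> unfolding X_def Y_def
      by (rule card_mult_outside_disjoint_cores_le[OF fin E1 E0 cover10 min_deg])
    moreover have "(2 * ?D + k) * card Y \<le> card X * card Y" "(2 * ?D + k) * card X \<le> card Y * card X"
      using X Y by (simp_all add: mult_right_mono)
    ultimately have "card X + card Y = 0"
      by (simp add: algebra_simps) linarith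
    then show False
      using X \<open>0 < k\<close> by simp
  qed
qed

lemma inj_on_add_mod: "inj_on (\<lambda>x. (x + a) mod M) {b..<b + (M :: nat)}"
proof -
  have "x = y" if "x \<in> {b..<b + M}" "y \<in> {b..<b + M}" "x \<le> y"
    and "(x + a) mod M = (y + a) mod M" for x y
  proof -
    have "M dvd y - x"
      using that(3,4) mod_eq_dvd_iff_nat[of "x + a" "y + a" M] by simp
    moreover have "y - x < M"
      using that(1,2) by auto
    ultimately show ?thesis
      using that(3) by (metis diff_is_0_eq dvd_imp_le le_antisym not_gr0 not_le)
  qed
  then show ?thesis
    unfolding inj_on_def by (metis nat_le_linear)
qed

definition cross :: "nat \<Rightarrow> nat \<Rightarrow> nat \<Rightarrow> bool" where
  "cross M u v \<longleftrightarrow> (u < M \<and> M \<le> v \<and> v < 2 * M) \<or> (v < M \<and> M \<le> u \<and> u < 2 * M)"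

lemma cross_commute: "cross M u v \<longleftrightarrow> cross M v u"
  unfolding cross_def by auto

lemma finite_cross_partners: "finite {u. cross M u v \<and> P u}"
  by (rule finite_subset[of _ "{..<2 * M}"]) (auto simp: cross_def)

lemma card_cross_partners_le:
  assumes "finite R"
  shows "card {u. cross M u v \<and> (u + v) mod M \<in> R} \<le> card R"
proof -
  let ?A = "{u. cross M u v \<and> (u + v) mod M \<in> R}"
  have "\<exists>b. ?A \<subseteq> {b..<b + M}"
  proof (cases "v < M")
    case True
    then have "?A \<subseteq> {M..<M + M}"
      unfolding cross_def by auto
    then show ?thesis by blast
  next
    case False
    then have "?A \<subseteq> {0..<0 + M}"
      unfolding cross_def by auto
    then show ?thesis by blast
  qed
  then have "inj_on (\<lambda>u. (u + v) mod M) ?A"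
    using inj_on_add_mod inj_on_subset by blast
  then show ?thesis
    using assms by (intro card_inj_on_le) auto
qed

definition extremal_graph :: "nat \<Rightarrow> nat \<Rightarrow> nat \<Rightarrow> nat set set" where
  "extremal_graph n M D =
     {{u, v} | u v. u < n \<and> v < n \<and> u \<noteq> v \<and> \<not> (cross M u v \<and> 2 * D \<le> (u + v) mod M)}"

definition extremal_colouring :: "nat \<Rightarrow> nat \<Rightarrow> nat set \<Rightarrow> nat" where
  "extremal_colouring M D e =
     (if (\<exists>u\<in>e. u < M) \<and> \<not> (\<exists>u v. e = {u, v} \<and> cross M u v \<and> (u + v) mod M < D) then 1 else 0)"

lemma doubleton_mem_extremal_graph_iff:
  "{u, v} \<in> extremal_graph n M D \<longleftrightarrow>
     u < n \<and> v < n \<and> u \<noteq> v \<and> \<not> (cross M u v \<and> 2 * D \<le> (u + v) mod M)"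
  unfolding extremal_graph_def by (auto simp: doubleton_eq_iff cross_commute add.commute)

lemma extremal_colouring_doubleton:
  "extremal_colouring M D {u, v} =
     (if (u < M \<or> v < M) \<and> \<not> (cross M u v \<and> (u + v) mod M < D) then 1 else 0)"
  unfolding extremal_colouring_def by (auto simp: doubleton_eq_iff cross_commute add.commute)

lemma is_graph_extremal_graph: "is_graph {..<n} (extremal_graph n M D)"
  unfolding is_graph_def extremal_graph_def edges_on_def by auto

lemma is_coloring_extremal_colouring: "is_coloring E (extremal_colouring M D) 2"
  unfolding is_coloring_def extremal_colouring_def by simp

lemma min_deg_ge_extremal_graph:
  "min_deg_ge {..<n} (extremal_graph n M D) (n - Suc (M - 2 * D))"
  unfolding min_deg_ge_def
proof
  fix v assume v: "v \<in> {..<n}"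
  let ?B = "{u. cross M u v \<and> (u + v) mod M \<in> {2 * D..<M}}"
  have "v \<notin> ?B"
    unfolding cross_def by auto
  then have card_B: "card (insert v ?B) \<le> Suc (M - 2 * D)"
    using card_cross_partners_le[of "{2 * D..<M}" M v] finite_cross_partners by simp
  have "{..<n} - insert v ?B \<subseteq> {u \<in> {..<n}. {u, v} \<in> extremal_graph n M D}"
    using v unfolding doubleton_mem_extremal_graph_iff cross_def by auto
  then have "card ({..<n} - insert v ?B) \<le> deg {..<n} (extremal_graph n M D) v"
    unfolding deg_def by (intro card_mono) auto
  moreover have "n - card (insert v ?B) \<le> card ({..<n} - insert v ?B)"
    using diff_card_le_card_Diff[of "insert v ?B" "{..<n}"] finite_cross_partners by simp
  ultimately show "n - Suc (M - 2 * D) \<le> deg {..<n} (extremal_graph n M D) v"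
    using card_B by linarith
qed

lemma extremal_red_deg_le:
  assumes "p < M"
  shows "deg {..<n} {e \<in> extremal_graph n M D. extremal_colouring M D e = 0} p \<le> D"
proof -
  let ?red = "{e \<in> extremal_graph n M D. extremal_colouring M D e = 0}"
  have "{u \<in> {..<n}. {u, p} \<in> ?red} \<subseteq> {u. cross M u p \<and> (u + p) mod M \<in> {..<D}}"
    using assms by (auto simp: extremal_colouring_doubleton split: if_splits)
  then have "deg {..<n} ?red p \<le> card {u. cross M u p \<and> (u + p) mod M \<in> {..<D}}"
    unfolding deg_def by (intro card_mono finite_cross_partners)
  also have "\<dots> \<le> D"
    using card_cross_partners_le[of "{..<D}" M p] by simp
  finally show ?thesis .
qed

lemma extremal_blue_deg_le:
  assumes "M \<le> q" "q < 2 * M" "i \<noteq> 0"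
  shows "deg {..<n} {e \<in> extremal_graph n M D. extremal_colouring M D e = i} q \<le> D"
proof -
  let ?blue = "{e \<in> extremal_graph n M D. extremal_colouring M D e = i}"
  have "{u \<in> {..<n}. {u, q} \<in> ?blue} \<subseteq> {u. cross M u q \<and> (u + q) mod M \<in> {D..<2 * D}}"
  proof (intro subsetI CollectI)
    fix u assume "u \<in> {u \<in> {..<n}. {u, q} \<in> ?blue}"
    then have edge: "{u, q} \<in> extremal_graph n M D" and colour: "extremal_colouring M D {u, q} \<noteq> 0"
      using assms(3) by auto
    then have "u < M" "\<not> (cross M u q \<and> (u + q) mod M < D)"
      using assms(1) unfolding extremal_colouring_doubleton by (auto split: if_splits)
    moreover have "cross M u q"
      using \<open>u < M\<close> assms(1,2) unfolding cross_def by auto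
    moreover have "\<not> 2 * D \<le> (u + q) mod M"
      using edge \<open>cross M u q\<close> unfolding doubleton_mem_extremal_graph_iff by auto
    ultimately show "cross M u q \<and> (u + q) mod M \<in> {D..<2 * D}"
      by auto
  qed
  then have "deg {..<n} ?blue q \<le> card {u. cross M u q \<and> (u + q) mod M \<in> {D..<2 * D}}"
    unfolding deg_def by (intro card_mono finite_cross_partners)
  also have "\<dots> \<le> D"
    using card_cross_partners_le[of "{D..<2 * D}" M q] by simp
  finally show ?thesis .
qed

lemma fG_extremal_graph_le:
  assumes "2 * M \<le> n"
  shows "fG {..<n} (extremal_graph n M D) (Suc D) 2 \<le> n - M"
proof (rule fG_le[OF is_coloring_extremal_colouring])
  fix t assume sub: "has_mono_sub {..<n} (extremal_graph n M D) (extremal_colouring M D) (Suc D) t"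
  have "\<exists>A \<subseteq> {..<n}. M \<le> card A \<and>
      (\<forall>v\<in>A. deg {..<n} {e \<in> extremal_graph n M D. extremal_colouring M D e = i} v < Suc D)" for i
  proof (cases "i = 0")
    case True
    then show ?thesis
      using assms extremal_red_deg_le by (intro exI[of _ "{..<M}"]) (auto simp: le_imp_less_Suc)
  next
    case False
    then show ?thesis
      using assms extremal_blue_deg_le by (intro exI[of _ "{M..<2 * M}"]) (auto simp: le_imp_less_Suc)
  qed
  then show "t \<le> n - M"
    using has_mono_sub_le_card_diff[OF _ sub] by simp
qed

theorem theorem1p3:
  fixes d k :: nat
  assumes "0 < d" and "0 < k"
  shows "\<exists>N. \<forall>n\<ge>N. int (f n (n - k) d 2) = int n - 2 * int d - int k + 3"
proof -
  define M where "M = 2 * d + k - 3"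
  define m where "m = 4 * (d - 1) + k"
  have M: "M - 2 * (d - 1) = k - 1" "int M = 2 * int d + int k - 3"
    using assms unfolding M_def by auto
  show ?thesis
  proof (rule exI[of _ "2 * M + 2 * (d - 1) * (m * (m + 1)) + k + 1"], intro allI impI)
    fix n assume n: "2 * M + 2 * (d - 1) * (m * (m + 1)) + k + 1 \<le> n"
    have "f n (n - k) d 2 = n - M"
    proof (rule f_eqI[OF is_graph_extremal_graph])
      show "min_deg_ge {..<n} (extremal_graph n M (d - 1)) (n - k)"
        using min_deg_ge_extremal_graph[of n M "d - 1"] M(1) assms(2) by simp
      show "fG {..<n} (extremal_graph n M (d - 1)) d 2 \<le> n - M"
        using fG_extremal_graph_le[of M n "d - 1"] n assms(1) by simp
    next
      fix E assume "is_graph {..<n} E" "min_deg_ge {..<n} E (n - k)"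
      then show "n - M \<le> fG {..<n} E d 2"
        using has_mono_sub_large[of "{..<n}" E k c d for c] n assms
        unfolding M_def m_def by (intro le_fG) auto
    qed
    then show "int (f n (n - k) d 2) = int n - 2 * int d - int k + 3"
      using n M(2) by simp
  qed
qed

end
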